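(* Let $q$ be a prime power, $r\mid(q-1)$ with $r\ge 3$, and $q/2\le\ell\le q-1$. The quantum Tamo–Barg code $\mathrm{CSS}(C,C)$ with parameters $q,r,\ell$ is a quantum locally recoverable code with locality $r$.
   Context: $[n]=\{0,\dots,n-1\}$, $\mathbb{F}_q^*=\mathbb{F}_q\setminus\{0\}$. For $S\subseteq\mathbb{Z}_{\ge0}$, $\mathbb{F}_q[X]^S=\{\sum_{i\in S}a_iX^i\}$, $\mathrm{ev}(f)=(f(x))_{x\in\mathbb{F}_q^*}$. Let $S=\{i\in[\ell]:i\not\equiv r-1\pmod r\}\cup\{i\in[q-1]:i\equiv1\pmod r\}$, $C=\mathrm{ev}(\mathbb{F}_q[X]^S)$; for $\ell\ge q/2$, $C^\perp\subseteq C$ and the quantum Tamo–Barg code is $\mathrm{CSS}(C,C)=\mathrm{span}\{\sum_{y\in C^\perp}|x+y\rangle:x\in C\}\subseteq(\mathbb{C}^q)^{\otimes(q-1)}$, with qudits indexed by $\mathbb{F}_q^*$. A quantum code $\mathcal{C}$ on qudit set $Q$ is locally recoverable with locality $r$ if for each $i\in Q$ there is $I_i\subseteq Q$ with $i\in I_i$, $|I_i|\le r$, and a quantum channel $\mathrm{Rec}_i$ from the qudits $I_i\setminus\{i\}$ to the qudits $I_i$ such that $(\mathrm{Rec}_i\otimes\mathrm{id})(\psi_{Q\setminus\{i\}})=\psi$ for every code state $\psi$ (here $\psi_B$ is the reduced density matrix on $B$). *)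

theory Defs
  imports Complex_Main "HOL-Computational_Algebra.Polynomial"
begin

definition qudits :: "'a::zero set" where
  "qudits = {x. x \<noteq> 0}"

(* Computational basis labels of a set B of qudits: assignments B -> F_q,
   represented as functions that vanish outside B. *)
definition configs :: "'a set \<Rightarrow> ('a \<Rightarrow> 'b::zero) set" where
  "configs B = {f. \<forall>x. x \<notin> B \<longrightarrow> f x = 0}"

definition restr :: "('a \<Rightarrow> 'b::zero) \<Rightarrow> 'a set \<Rightarrow> 'a \<Rightarrow> 'b" where
  "restr f B = (\<lambda>x. if x \<in> B then f x else 0)"

(* Operators (matrices) on qudit subsystems, indexed by basis labels. *)
type_synonym 'a qop = "('a \<Rightarrow> 'a) \<Rightarrow> ('a \<Rightarrow> 'a) \<Rightarrow> complex"

(* Reduced density matrix: partial trace of an operator on A down to B \<subseteq> A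
   (tracing out A - B). *)
definition ptrace :: "'a set \<Rightarrow> 'a set \<Rightarrow> ('a::zero) qop \<Rightarrow> 'a qop" where
  "ptrace A B \<rho> = (\<lambda>u v. \<Sum>w\<in>configs (A - B).
      \<rho> (\<lambda>x. if x \<in> B then u x else w x) (\<lambda>x. if x \<in> B then v x else w x))"

definition TB_S :: "nat \<Rightarrow> nat \<Rightarrow> nat \<Rightarrow> nat set" where
  "TB_S q r l = {i. i < l \<and> i mod r \<noteq> r - 1} \<union> {i. i < q - 1 \<and> i mod r = 1}"

definition ev :: "'a::field poly \<Rightarrow> 'a \<Rightarrow> 'a" where
  "ev p = (\<lambda>x. if x \<noteq> 0 then poly p x else 0)"

definition TB_code :: "nat \<Rightarrow> nat \<Rightarrow> ('a::{finite,field} \<Rightarrow> 'a) set" where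
  "TB_code r l = ev ` {p. \<forall>i. coeff p i \<noteq> 0 \<longrightarrow> i \<in> TB_S (card (UNIV :: 'a set)) r l}"

definition dual_code :: "('a::{finite,field} \<Rightarrow> 'a) set \<Rightarrow> ('a \<Rightarrow> 'a) set" where
  "dual_code C = {y \<in> configs qudits. \<forall>x\<in>C. (\<Sum>t\<in>qudits. x t * y t) = 0}"

(* CSS(C1,C2) = span { sum_{y in C2^perp} |x+y> : x in C1 } (complex span;
   C1 is finite so the span is the set of these linear combinations). *)
definition CSS_space :: "('a::{finite,field} \<Rightarrow> 'a) set \<Rightarrow> ('a \<Rightarrow> 'a) set
    \<Rightarrow> (('a \<Rightarrow> 'a) \<Rightarrow> complex) set" where
  "CSS_space C1 C2 = {\<phi>. \<exists>c :: ('a \<Rightarrow> 'a) \<Rightarrow> complex.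
      \<phi> = (\<lambda>w. \<Sum>x\<in>C1. c x *
              (if \<exists>y\<in>dual_code C2. w = (\<lambda>t. x t + y t) then 1 else 0))}"

(* code states: density matrices on Q supported on the code space V, i.e.
   convex combinations of pure normalized code states *)
definition code_state :: "'a set \<Rightarrow> (('a \<Rightarrow> 'a) \<Rightarrow> complex) set \<Rightarrow> ('a::zero) qop \<Rightarrow> bool" where
  "code_state Q V \<rho> \<longleftrightarrow> (\<exists>(n::nat) (p::nat \<Rightarrow> real) \<phi>.
      (\<forall>k<n. p k \<ge> 0 \<and> \<phi> k \<in> V \<and> (\<Sum>w\<in>configs Q. (cmod (\<phi> k w))\<^sup>2) = 1) \<and>
      (\<Sum>k<n. p k) = 1 \<and>
      (\<forall>u\<in>configs Q. \<forall>v\<in>configs Q.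
         \<rho> u v = (\<Sum>k<n. complex_of_real (p k) * \<phi> k u * cnj (\<phi> k v))))"

(* quantum channel from qudits A to qudits B, in Kraus form:
   Kraus operators K j (j < m), K j v u with v \<in> configs B, u \<in> configs A,
   satisfying sum_j K_j^dagger K_j = Id *)
definition kraus_channel :: "'a set \<Rightarrow> 'a set \<Rightarrow> (nat \<Rightarrow> ('a::zero) qop) \<Rightarrow> nat \<Rightarrow> bool" where
  "kraus_channel A B K m \<longleftrightarrow>
     (\<forall>u\<in>configs A. \<forall>u'\<in>configs A.
        (\<Sum>j<m. \<Sum>v\<in>configs B. cnj (K j v u) * K j v u') = (if u = u' then 1 else 0))"

(* (Rec \<otimes> id)(\<rho>) where Rec: A -> B is the Kraus channel K, identity acts on Q - B;
   \<rho> lives on A \<union> (Q - B), the result on Q (assuming A \<subseteq> B \<subseteq> Q). *)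
definition apply_ext :: "'a set \<Rightarrow> 'a set \<Rightarrow> 'a set \<Rightarrow> (nat \<Rightarrow> ('a::zero) qop) \<Rightarrow> nat
    \<Rightarrow> 'a qop \<Rightarrow> 'a qop" where
  "apply_ext Q A B K m \<rho> = (\<lambda>v v'. \<Sum>j<m. \<Sum>u\<in>configs (A \<union> (Q - B)). \<Sum>u'\<in>configs (A \<union> (Q - B)).
      (if restr v (Q - B) = restr u (Q - B) \<and> restr v' (Q - B) = restr u' (Q - B)
       then K j (restr v B) (restr u A) * \<rho> u u' * cnj (K j (restr v' B) (restr u' A))
       else 0))"

definition locally_recoverable :: "('a::zero) set \<Rightarrow> (('a \<Rightarrow> 'a) \<Rightarrow> complex) set \<Rightarrow> nat \<Rightarrow> bool" where
  "locally_recoverable Q V r \<longleftrightarrow>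
    (\<forall>i\<in>Q. \<exists>I. i \<in> I \<and> I \<subseteq> Q \<and> card I \<le> r \<and>
       (\<exists>K m. kraus_channel (I - {i}) I K m \<and>
          (\<forall>\<psi>. code_state Q V \<psi> \<longrightarrow>
             (\<forall>v\<in>configs Q. \<forall>v'\<in>configs Q.
                apply_ext Q (I - {i}) I K m (ptrace Q (Q - {i}) \<psi>) v v' = \<psi> v v'))))"

end

(* Fix an erased qudit i and let n = (q - 1) / r.  The word h(t) = t [t^r = i^r] is the
   evaluation of (X / n) (1 + X^r / i^r + ... + (X^r / i^r)^(n-1)).  Its exponents are
   congruent to 1 mod r, so h lies in C; and since r >= 3 they never add up with an exponent
   of C to a multiple of q - 1, so h lies in the dual of C as well, because the power sum of
   t^m over the nonzero field elements vanishes unless q - 1 divides m.  Hence every state of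
   CSS(C, C) is supported on words w with h . w = 0 and is invariant under w -> w + c h.
   These two stabilisers let a channel on the support {t. t^r = i^r} of h, which has at most r
   elements, restore qudit i. *)

theory Submission
  imports Defs "HOL-Library.Cardinality"
begin

section \<open>Finite fields\<close>

lemma card_power_eq_le:
  fixes c :: "'a::idom"
  assumes "d > 0"
  shows "card {x. x ^ d = c} \<le> d"
proof -
  let ?p = "monom 1 d + [:-c:]"
  have deg: "degree ?p = d"
    using assms by (subst degree_add_eq_left) (auto simp: degree_monom_eq)
  then have "?p \<noteq> 0"
    using assms by auto
  moreover have "{x. x ^ d = c} = {x. poly ?p x = 0}"
    by (auto simp: poly_monom)
  ultimately show ?thesis
    using card_poly_roots_bound[of ?p] deg by simp
qed

lemma of_nat_CARD_eq_0: "(of_nat CARD('a) :: 'a::{finite,ring_1}) = 0"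
proof -
  have shift: "bij (\<lambda>x::'a. x + 1)"
    by (rule bij_betw_byWitness[where f'="\<lambda>x. x - 1"]) auto
  have "(\<Sum>x\<in>UNIV. x) = (\<Sum>x\<in>UNIV. (x::'a) + 1)"
    using sum.reindex_bij_betw[OF shift, of "\<lambda>x. x"] by simp
  also have "\<dots> = (\<Sum>x\<in>UNIV. x) + of_nat CARD('a)"
    by (simp add: sum.distrib)
  finally show ?thesis by simp
qed

lemma CARD_field_ge_2: "CARD('a::{finite,field}) \<ge> 2"
  using card_mono[of "UNIV :: 'a set" "{0, 1}"] by simp

lemma qudits_eq: "qudits = UNIV - {0}"
  by (auto simp: qudits_def)

lemma card_qudits: "card (qudits :: 'a::{finite,field} set) = CARD('a) - 1"
  by (simp add: qudits_eq card_Diff_singleton)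

lemma power_CARD_minus_1:
  fixes x :: "'a::{finite,field}"
  assumes "x \<noteq> 0"
  shows "x ^ (CARD('a) - 1) = 1"
proof -
  have "bij_betw ((*) x) qudits qudits"
    by (rule bij_betw_byWitness[where f'="\<lambda>y. y / x"]) (use assms in \<open>auto simp: qudits_def\<close>)
  then have "(\<Prod>y\<in>qudits. y) = (\<Prod>y\<in>qudits. x * y)"
    using prod.reindex_bij_betw[of "(*) x" qudits qudits "\<lambda>y. y"] by simp
  also have "\<dots> = x ^ card (qudits :: 'a set) * (\<Prod>y\<in>qudits. y)"
    by (simp add: prod.distrib)
  moreover have "(\<Prod>y\<in>qudits. y) \<noteq> (0::'a)"
    by (simp add: qudits_def)
  ultimately show ?thesis
    by (simp add: card_qudits)
qed

lemma sum_qudits_power_eq_0: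
  assumes "\<not> (CARD('a::{finite,field}) - 1) dvd m"
  shows "(\<Sum>t\<in>(qudits :: 'a set). t ^ m) = 0"
proof -
  define d where "d = m mod (CARD('a) - 1)"
  have "d \<noteq> 0" "d < CARD('a) - 1"
    using assms CARD_field_ge_2[where 'a='a] by (auto simp: d_def mod_eq_0_iff_dvd)
  have "\<exists>x\<^sub>0 \<in> qudits. x\<^sub>0 ^ d \<noteq> (1::'a)"
  proof (rule ccontr)
    assume "\<not> ?thesis"
    then have "card (qudits :: 'a set) \<le> card {x::'a. x ^ d = 1}"
      by (intro card_mono) auto
    also have "\<dots> \<le> d"
      using card_power_eq_le[of d "1::'a"] \<open>d \<noteq> 0\<close> by simp
    finally show False
      using \<open>d < CARD('a) - 1\<close> by (simp add: card_qudits)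
  qed
  then obtain x\<^sub>0 :: 'a where x\<^sub>0: "x\<^sub>0 \<noteq> 0" "x\<^sub>0 ^ d \<noteq> 1"
    by (auto simp: qudits_def)
  have "m = (CARD('a) - 1) * (m div (CARD('a) - 1)) + d"
    by (simp add: d_def)
  then have "x\<^sub>0 ^ m = (x\<^sub>0 ^ (CARD('a) - 1)) ^ (m div (CARD('a) - 1)) * x\<^sub>0 ^ d"
    by (metis power_add power_mult)
  then have "x\<^sub>0 ^ m \<noteq> 1"
    using x\<^sub>0 power_CARD_minus_1[OF x\<^sub>0(1)] by simp
  have "bij_betw ((*) x\<^sub>0) qudits qudits"
    by (rule bij_betw_byWitness[where f'="\<lambda>y. y / x\<^sub>0"]) (use x\<^sub>0 in \<open>auto simp: qudits_def\<close>)
  then have "(\<Sum>t\<in>(qudits :: 'a set). t ^ m) = (\<Sum>t\<in>qudits. (x\<^sub>0 * t) ^ m)"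
    using sum.reindex_bij_betw[of "(*) x\<^sub>0" qudits qudits "\<lambda>y. y ^ m"] by simp
  also have "\<dots> = x\<^sub>0 ^ m * (\<Sum>t\<in>qudits. t ^ m)"
    by (simp add: power_mult_distrib sum_distrib_left)
  finally show ?thesis
    using \<open>x\<^sub>0 ^ m \<noteq> 1\<close> by (metis mult_cancel_right1)
qed

section \<open>A local parity check of the Tamo--Barg code\<close>

definition recovery_set :: "nat \<Rightarrow> 'a::field \<Rightarrow> 'a set" where
  "recovery_set r i = {t. t \<noteq> 0 \<and> t ^ r = i ^ r}"

definition local_check :: "nat \<Rightarrow> 'a::field \<Rightarrow> 'a \<Rightarrow> 'a" where
  "local_check r i t = (if t \<in> recovery_set r i then t else 0)"

text \<open>With \<open>n = (q - 1) / r\<close> and \<open>z = t ^ r / \<beta>\<close>, an \<open>n\<close>-th root of unity for \<open>t \<noteq> 0\<close>,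
  the polynomial evaluates to \<open>t / n \<cdot> (1 + z + \<dots> + z ^ (n - 1))\<close>, i.e. to \<open>t\<close> if \<open>t ^ r = \<beta>\<close> and to \<open>0\<close>
  otherwise.\<close>
definition local_check_poly :: "nat \<Rightarrow> 'a::{finite,field} \<Rightarrow> 'a poly" where
  "local_check_poly r \<beta> = smult (inverse (of_nat ((CARD('a) - 1) div r)))
     (\<Sum>k<(CARD('a) - 1) div r. monom (inverse \<beta> ^ k) (r * k + 1))"

lemma card_recovery_set_le:
  fixes i :: "'a::{finite,field}"
  assumes "r > 0"
  shows "card (recovery_set r i) \<le> r"
proof -
  have "card (recovery_set r i) \<le> card {t. t ^ r = i ^ r}"
    by (rule card_mono) (auto simp: recovery_set_def)
  also have "\<dots> \<le> r"
    using card_power_eq_le[OF assms] .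
  finally show ?thesis .
qed

lemma poly_local_check_poly:
  fixes i t :: "'a::{finite,field}"
  assumes r: "r dvd CARD('a) - 1" and "i \<noteq> 0" "t \<noteq> 0"
  shows "poly (local_check_poly r (i ^ r)) t = local_check r i t"
proof -
  define n where "n = (CARD('a) - 1) div r"
  define z where "z = t ^ r * inverse (i ^ r)"
  have rn: "r * n = CARD('a) - 1"
    using r by (simp add: n_def)
  have "of_nat r * of_nat n = (of_nat (CARD('a) - 1) :: 'a)"
    by (metis rn of_nat_mult)
  also have "\<dots> = -1"
    using CARD_field_ge_2[where 'a='a] of_nat_CARD_eq_0[where 'a='a] by (simp add: of_nat_diff)
  finally have "(of_nat n :: 'a) \<noteq> 0"
    by auto
  have "z ^ n = t ^ (r * n) * inverse (i ^ (r * n))"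
    by (simp add: z_def power_mult_distrib power_mult power_inverse)
  then have "z ^ n = 1"
    using rn power_CARD_minus_1[OF assms(2)] power_CARD_minus_1[OF assms(3)] by simp
  have "poly (local_check_poly r (i ^ r)) t = inverse (of_nat n) * t * (\<Sum>k<n. z ^ k)"
    by (simp add: local_check_poly_def n_def z_def poly_sum poly_monom sum_distrib_left
        power_mult_distrib mult_ac flip: power_mult)
  also have "(\<Sum>k<n. z ^ k) = (if z = 1 then of_nat n else 0)"
    using \<open>z ^ n = 1\<close> by (simp add: geometric_sum)
  also have "(z = 1) \<longleftrightarrow> t ^ r = i ^ r"
    using assms(2) by (auto simp: z_def field_simps)
  finally show ?thesis
    using \<open>of_nat n \<noteq> 0\<close> assms(3) by (simp add: local_check_def recovery_set_def)
qed

lemma ev_local_check_poly: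
  fixes i :: "'a::{finite,field}"
  assumes "r dvd CARD('a) - 1" and "i \<noteq> 0"
  shows "ev (local_check_poly r (i ^ r)) = local_check r i"
  using poly_local_check_poly[OF assms] by (auto simp: ev_def local_check_def recovery_set_def)

lemma coeff_local_check_poly_nonzero:
  fixes \<beta> :: "'a::{finite,field}"
  assumes "coeff (local_check_poly r \<beta>) j \<noteq> 0"
  obtains k where "k < (CARD('a) - 1) div r" and "j = r * k + 1"
proof -
  have "coeff (local_check_poly r \<beta>) j = 0" if "\<forall>k < (CARD('a) - 1) div r. j \<noteq> r * k + 1"
    using that by (auto simp: local_check_poly_def coeff_sum coeff_monom intro!: sum.neutral)
  then show ?thesis
    using assms that by blast
qed

lemma sum_qudits_poly_mult_eq_0:
  fixes p g :: "'a::{finite,field} poly"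
  assumes "\<And>a b. coeff p a \<noteq> 0 \<Longrightarrow> coeff g b \<noteq> 0 \<Longrightarrow> \<not> (CARD('a) - 1) dvd a + b"
  shows "(\<Sum>t\<in>qudits. poly p t * poly g t) = 0"
proof -
  have "(\<Sum>t\<in>qudits. poly p t * poly g t) =
      (\<Sum>t\<in>qudits. \<Sum>a\<le>degree p. \<Sum>b\<le>degree g. coeff p a * coeff g b * t ^ (a + b))"
    unfolding poly_altdef sum_product by (simp add: power_add mult_ac)
  also have "\<dots> = (\<Sum>a\<le>degree p. \<Sum>b\<le>degree g. coeff p a * coeff g b * (\<Sum>t\<in>qudits. t ^ (a + b)))"
    by (subst sum.swap, subst sum.swap) (simp add: sum_distrib_left)
  also have "\<dots> = 0"
    using assms sum_qudits_power_eq_0 by (intro sum.neutral ballI) force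
  finally show ?thesis .
qed

lemma TB_S_add_local_exponent_not_dvd:
  assumes "r dvd q - 1" and "r \<ge> 3" and "a \<in> TB_S q r l"
  shows "\<not> (q - 1) dvd a + (r * k + 1)"
proof
  assume "(q - 1) dvd a + (r * k + 1)"
  then have "r dvd (a + 1) + r * k"
    using assms(1) by (simp add: add_ac dvd_trans)
  then have "(a + 1) mod r = 0"
    by (metis dvd_add_times_triv_right_iff mult.commute dvd_imp_mod_0)
  then have "a mod r = r - 1"
    using assms(2) by (simp add: mod_Suc split: if_splits)
  then show False
    using assms(2,3) by (auto simp: TB_S_def)
qed

lemma local_check_in_TB_code:
  fixes i :: "'a::{finite,field}"
  assumes r: "r dvd CARD('a) - 1" and "r \<ge> 2" and "i \<noteq> 0"
  shows "local_check r i \<in> TB_code r l"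
proof -
  have "j \<in> TB_S CARD('a) r l" if coeff: "coeff (local_check_poly r (i ^ r)) j \<noteq> 0" for j
  proof -
    obtain k where k: "k < (CARD('a) - 1) div r" "j = r * k + 1"
      using coeff_local_check_poly_nonzero[OF coeff] .
    have "r * k + r \<le> CARD('a) - 1"
      using k(1) r by (metis dvd_div_mult_self mult.commute mult_Suc_right Suc_leI mult_le_mono2 add.commute)
    then show ?thesis
      using k \<open>r \<ge> 2\<close> by (auto simp: TB_S_def mod_Suc)
  qed
  then show ?thesis
    unfolding TB_code_def by (auto simp flip: ev_local_check_poly[OF r \<open>i \<noteq> 0\<close>])
qed

lemma local_check_in_dual_code:
  fixes i :: "'a::{finite,field}"
  assumes r: "r dvd CARD('a) - 1" and "r \<ge> 3" and "i \<noteq> 0"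
  shows "local_check r i \<in> dual_code (TB_code r l)"
  unfolding dual_code_def
proof (intro CollectI conjI ballI)
  show "local_check r i \<in> configs qudits"
    by (simp add: configs_def qudits_def local_check_def recovery_set_def)
  fix x :: "'a \<Rightarrow> 'a"
  assume "x \<in> TB_code r l"
  then obtain p where x: "x = ev p" and p: "\<And>a. coeff p a \<noteq> 0 \<Longrightarrow> a \<in> TB_S CARD('a) r l"
    unfolding TB_code_def by blast
  have "(\<Sum>t\<in>qudits. x t * local_check r i t) = (\<Sum>t\<in>qudits. poly p t * poly (local_check_poly r (i ^ r)) t)"
    by (rule sum.cong) (auto simp: x ev_def qudits_def simp flip: ev_local_check_poly[OF r \<open>i \<noteq> 0\<close>])
  also have "\<dots> = 0"
  proof (rule sum_qudits_poly_mult_eq_0)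
    fix a b
    assume "coeff p a \<noteq> 0" and "coeff (local_check_poly r (i ^ r)) b \<noteq> 0"
    then show "\<not> (CARD('a) - 1) dvd a + b"
      using p TB_S_add_local_exponent_not_dvd[OF r \<open>r \<ge> 3\<close>]
      by (metis coeff_local_check_poly_nonzero)
  qed
  finally show "(\<Sum>t\<in>qudits. x t * local_check r i t) = 0" .
qed

section \<open>Partial traces and extended channels\<close>

definition apply_ext_vec :: "'a set \<Rightarrow> 'a set \<Rightarrow> 'a set \<Rightarrow> ('a::zero) qop
    \<Rightarrow> (('a \<Rightarrow> 'a) \<Rightarrow> complex) \<Rightarrow> ('a \<Rightarrow> 'a) \<Rightarrow> complex" where
  "apply_ext_vec Q A B K \<phi> v = (\<Sum>u\<in>configs (A \<union> (Q - B)).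
      if restr v (Q - B) = restr u (Q - B) then K (restr v B) (restr u A) * \<phi> u else 0)"

lemma apply_ext_cong:
  assumes "\<And>u u'. u \<in> configs (A \<union> (Q - B)) \<Longrightarrow> u' \<in> configs (A \<union> (Q - B)) \<Longrightarrow> \<rho> u u' = \<rho>' u u'"
  shows "apply_ext Q A B K m \<rho> v v' = apply_ext Q A B K m \<rho>' v v'"
  unfolding apply_ext_def by (intro sum.cong refl) (simp add: assms)

lemma apply_ext_sum:
  "apply_ext Q A B K m (\<lambda>u u'. \<Sum>k<n. c k * \<rho> k u u') v v' = (\<Sum>k<n. c k * apply_ext Q A B K m (\<rho> k) v v')"
proof -
  have "apply_ext Q A B K m (\<lambda>u u'. \<Sum>k<n. c k * \<rho> k u u') v v' =
      (\<Sum>j<m. \<Sum>u\<in>configs (A \<union> (Q - B)). \<Sum>u'\<in>configs (A \<union> (Q - B)). \<Sum>k<n. c k *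
        (if restr v (Q - B) = restr u (Q - B) \<and> restr v' (Q - B) = restr u' (Q - B)
         then K j (restr v B) (restr u A) * \<rho> k u u' * cnj (K j (restr v' B) (restr u' A)) else 0))"
    unfolding apply_ext_def by (intro sum.cong refl) (auto simp: sum_distrib_left sum_distrib_right mult_ac)
  also have "\<dots> = (\<Sum>k<n. c k * apply_ext Q A B K m (\<rho> k) v v')"
    unfolding apply_ext_def sum_distrib_left
    by (subst sum.swap, subst (2) sum.swap, subst (3) sum.swap) (rule refl)
  finally show ?thesis .
qed

lemma apply_ext_sum_rank_one:
  "apply_ext Q A B K m (\<lambda>u u'. \<Sum>x\<in>X. f x u * cnj (f x u')) v v' =
   (\<Sum>j<m. \<Sum>x\<in>X. apply_ext_vec Q A B (K j) (f x) v * cnj (apply_ext_vec Q A B (K j) (f x) v'))"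
proof -
  have if_mult: "(if P \<and> P' then a * (\<Sum>x\<in>X. g x * cnj (g' x)) * cnj a' else 0) =
      (\<Sum>x\<in>X. (if P then a * g x else 0) * cnj (if P' then a' * g' x else 0))"
    for P P' and a a' :: complex and g g' :: "'b \<Rightarrow> complex"
    by (cases P; cases P') (auto simp: sum_distrib_left sum_distrib_right mult_ac)
  show ?thesis
    unfolding apply_ext_def apply_ext_vec_def cnj_sum sum_product
    by (simp only: if_mult, subst (2) sum.swap, subst sum.swap) (rule refl)
qed

lemma ptrace_remove_qudit:
  fixes \<rho> :: "('a::zero) qop"
  assumes "i \<in> Q" and u: "u \<in> configs (Q - {i})" and u': "u' \<in> configs (Q - {i})"
  shows "ptrace Q (Q - {i}) \<rho> u u' = (\<Sum>x\<in>UNIV. \<rho> (u(i := x)) (u'(i := x)))"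
proof -
  define e :: "'a \<Rightarrow> 'a \<Rightarrow> 'a" where "e x = (\<lambda>_. 0)(i := x)" for x
  have "configs {i} = range e"
  proof
    show "configs {i} \<subseteq> range e"
    proof
      fix w :: "'a \<Rightarrow> 'a"
      assume "w \<in> configs {i}"
      then have "w = e (w i)"
        by (auto simp: configs_def e_def)
      then show "w \<in> range e"
        by blast
    qed
  qed (auto simp: configs_def e_def)
  moreover have "inj e"
    by (rule injI) (metis e_def fun_upd_same)
  moreover have "(\<lambda>t. if t \<in> Q - {i} then f t else e x t) = f(i := x)" if "f \<in> configs (Q - {i})" for f x
    using that by (auto simp: configs_def e_def)
  moreover have "Q - (Q - {i}) = {i}"
    using assms(1) by auto
  ultimately show ?thesis
    unfolding ptrace_def using u u' by (simp add: sum.reindex)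
qed

section \<open>Stabilisers of \<open>CSS(C, C)\<close> from words of \<open>C \<inter> C\<^sup>\<bottom>\<close>\<close>

definition syndrome :: "('a::{finite,field} \<Rightarrow> 'a) \<Rightarrow> ('a \<Rightarrow> 'a) \<Rightarrow> 'a" where
  "syndrome h w = (\<Sum>t\<in>qudits. h t * w t)"

text \<open>A word \<open>h \<in> C \<inter> C\<^sup>\<bottom>\<close> gives a \<open>Z\<close>-type and an \<open>X\<close>-type stabiliser of \<open>CSS(C, C)\<close>.\<close>
definition stabilized_by :: "('a::{finite,field} \<Rightarrow> 'a) \<Rightarrow> (('a \<Rightarrow> 'a) \<Rightarrow> complex) \<Rightarrow> bool" where
  "stabilized_by h \<phi> \<longleftrightarrow>
     (\<forall>w. \<phi> w \<noteq> 0 \<longrightarrow> syndrome h w = 0) \<and> (\<forall>w c. \<phi> (\<lambda>t. w t + c * h t) = \<phi> w)"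

lemma stabilized_by_syndrome:
  "stabilized_by h \<phi> \<Longrightarrow> \<phi> w \<noteq> 0 \<Longrightarrow> syndrome h w = 0"
  by (simp add: stabilized_by_def)

lemma stabilized_by_translate:
  "stabilized_by h \<phi> \<Longrightarrow> \<phi> (\<lambda>t. w t + c * h t) = \<phi> w"
  by (simp add: stabilized_by_def)

lemma syndrome_upd:
  assumes "i \<in> qudits"
  shows "syndrome h (w(i := s)) = syndrome h w + h i * (s - w i)"
proof -
  have "syndrome h (w(i := s)) = (\<Sum>t\<in>qudits. h t * w t + (if t = i then h i * (s - w i) else 0))"
    unfolding syndrome_def by (rule sum.cong) (auto simp: algebra_simps)
  then show ?thesis
    using assms by (simp add: sum.distrib syndrome_def)
qed

lemma syndrome_cong:
  assumes "h \<in> configs I" and "\<And>t. t \<in> I \<Longrightarrow> w t = w' t"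
  shows "syndrome h w = syndrome h w'"
  unfolding syndrome_def by (rule sum.cong) (use assms in \<open>auto simp: configs_def\<close>)

lemma stabilized_by_upd:
  assumes "stabilized_by h \<phi>" and "i \<in> qudits" and "h i \<noteq> 0"
  shows "(if syndrome h w = 0 then \<phi> (w(i := x)) else 0) = (if x = w i then \<phi> w else 0)"
proof (cases "syndrome h w = 0")
  case True
  have "\<phi> (w(i := x)) = 0" if "x \<noteq> w i"
  proof -
    have "syndrome h (w(i := x)) \<noteq> 0"
      using True that assms(3) by (simp add: syndrome_upd[OF assms(2)])
    then show ?thesis
      using stabilized_by_syndrome[OF assms(1)] by blast
  qed
  then show ?thesis
    using True by simp
next
  case False
  then show ?thesis
    using stabilized_by_syndrome[OF assms(1), of w] by auto
qed

lemma dual_code_add_scaled: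
  assumes "y \<in> dual_code C" and "z \<in> dual_code C"
  shows "(\<lambda>t. y t + a * z t) \<in> dual_code C"
proof -
  have "(\<Sum>t\<in>qudits. x t * (y t + a * z t)) =
      (\<Sum>t\<in>qudits. x t * y t) + a * (\<Sum>t\<in>qudits. x t * z t)" for x
    by (simp add: distrib_left sum.distrib sum_distrib_left mult_ac)
  then show ?thesis
    using assms unfolding dual_code_def configs_def by auto
qed

lemma dual_code_coset_translate:
  assumes "h \<in> dual_code C"
  shows "(\<exists>y\<in>dual_code C. (\<lambda>t. w t + c * h t) = (\<lambda>t. x t + y t)) \<longleftrightarrow>
         (\<exists>y\<in>dual_code C. w = (\<lambda>t. x t + y t))"
proof
  assume "\<exists>y\<in>dual_code C. (\<lambda>t. w t + c * h t) = (\<lambda>t. x t + y t)"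
  then obtain y where y: "y \<in> dual_code C" and "(\<lambda>t. w t + c * h t) = (\<lambda>t. x t + y t)"
    by blast
  then have "w = (\<lambda>t. x t + (y t + (- c) * h t))"
    by (simp add: fun_eq_iff algebra_simps)
  with dual_code_add_scaled[OF y assms, of "- c"] show "\<exists>y\<in>dual_code C. w = (\<lambda>t. x t + y t)"
    by (intro bexI[of _ "\<lambda>t. y t + - c * h t"])
next
  assume "\<exists>y\<in>dual_code C. w = (\<lambda>t. x t + y t)"
  then obtain y where y: "y \<in> dual_code C" and "w = (\<lambda>t. x t + y t)"
    by blast
  then have "(\<lambda>t. w t + c * h t) = (\<lambda>t. x t + (y t + c * h t))"
    by (simp add: algebra_simps)
  with dual_code_add_scaled[OF y assms, of c] show "\<exists>y\<in>dual_code C. (\<lambda>t. w t + c * h t) = (\<lambda>t. x t + y t)"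
    by (intro bexI[of _ "\<lambda>t. y t + c * h t"])
qed

lemma CSS_space_stabilized_by:
  assumes "h \<in> C" and "h \<in> dual_code C" and "\<phi> \<in> CSS_space C C"
  shows "stabilized_by h \<phi>"
  unfolding stabilized_by_def
proof (intro conjI allI impI)
  obtain a where \<phi>: "\<phi> = (\<lambda>w. \<Sum>x\<in>C. a x * (if \<exists>y\<in>dual_code C. w = (\<lambda>t. x t + y t) then 1 else 0))"
    using assms(3) unfolding CSS_space_def by blast
  show "\<phi> (\<lambda>t. w t + c * h t) = \<phi> w" for w c
    unfolding \<phi> dual_code_coset_translate[OF assms(2)] ..
  fix w
  assume "\<phi> w \<noteq> 0"
  have "\<exists>x\<in>C. \<exists>y\<in>dual_code C. w = (\<lambda>t. x t + y t)"
  proof (rule ccontr)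
    assume "\<not> ?thesis"
    then have "\<phi> w = 0"
      unfolding \<phi> by (auto intro!: sum.neutral)
    with \<open>\<phi> w \<noteq> 0\<close> show False ..
  qed
  then obtain x y where "x \<in> C" and "y \<in> dual_code C" and "w = (\<lambda>t. x t + y t)"
    by blast
  then have "syndrome h w = (\<Sum>t\<in>qudits. x t * h t) + (\<Sum>t\<in>qudits. h t * y t)"
    unfolding syndrome_def by (simp add: distrib_left sum.distrib mult_ac)
  also have "\<dots> = 0"
    using \<open>x \<in> C\<close> \<open>y \<in> dual_code C\<close> assms(1,2) unfolding dual_code_def by auto
  finally show "syndrome h w = 0" .
qed

section \<open>The recovery channel\<close>

lemma translate_upd_inject:
  fixes h u u' :: "'a \<Rightarrow> 'b::field"
  assumes "h i \<noteq> 0" and "u i = 0" and "u' i = 0"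
  shows "(\<lambda>t. (u(i := s)) t + c * h t) = (\<lambda>t. (u'(i := s)) t + c' * h t) \<longleftrightarrow> u = u' \<and> c = c'"
proof
  assume eq: "(\<lambda>t. (u(i := s)) t + c * h t) = (\<lambda>t. (u'(i := s)) t + c' * h t)"
  have "c * h i = c' * h i"
    using fun_cong[OF eq, of i] by simp
  then have "c = c'"
    using assms(1) by simp
  moreover have "u t = u' t" for t
    using fun_cong[OF eq, of t] assms(2,3) \<open>c = c'\<close> by (cases "t = i") auto
  ultimately show "u = u' \<and> c = c'"
    by auto
qed simp

lemma restr_translate_iff:
  fixes h w u :: "'a \<Rightarrow> 'b::field"
  assumes "I \<subseteq> Q" and "i \<in> I" and "h \<in> configs I" and "w \<in> configs Q" and "u \<in> configs (Q - {i})"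
  shows "restr w (Q - I) = restr u (Q - I) \<and> restr w I = (\<lambda>t. ((restr u (I - {i}))(i := s)) t + c * h t)
    \<longleftrightarrow> w = (\<lambda>t. (u(i := s)) t + c * h t)"
proof
  assume "restr w (Q - I) = restr u (Q - I) \<and> restr w I = (\<lambda>t. ((restr u (I - {i}))(i := s)) t + c * h t)"
  then have outside: "restr w (Q - I) t = restr u (Q - I) t"
    and inside: "restr w I t = ((restr u (I - {i}))(i := s)) t + c * h t" for t
    by simp_all
  have "w t = (u(i := s)) t + c * h t" for t
    using assms outside[of t] inside[of t]
    by (cases "t \<in> I"; cases "t \<in> Q") (auto simp: restr_def configs_def)
  then show "w = (\<lambda>t. (u(i := s)) t + c * h t)" ..
next
  assume "w = (\<lambda>t. (u(i := s)) t + c * h t)"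
  then show "restr w (Q - I) = restr u (Q - I) \<and> restr w I = (\<lambda>t. ((restr u (I - {i}))(i := s)) t + c * h t)"
    using assms by (auto simp: fun_eq_iff restr_def configs_def)
qed

lemma eq_translate_upd_iff:
  fixes h w u :: "'a \<Rightarrow> 'b::field"
  assumes "h i \<noteq> 0" and "u i = 0"
  shows "w = (\<lambda>t. (u(i := s)) t + c * h t) \<longleftrightarrow>
    c = (w i - s) / h i \<and> u = (\<lambda>t. w t - c * h t)(i := 0)"
  using assms by (auto simp: fun_eq_iff field_simps)

lemma restr_translate_ex_iff:
  fixes h w u :: "'a \<Rightarrow> 'b::field"
  assumes "I \<subseteq> Q" and "i \<in> I" and "h \<in> configs I" and "h i \<noteq> 0"
    and w: "w \<in> configs Q" and u: "u \<in> configs (Q - {i})"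
  shows "restr w (Q - I) = restr u (Q - I) \<and>
      (\<exists>c. restr w I = (\<lambda>t. ((restr u (I - {i}))(i := s)) t + c * h t)) \<longleftrightarrow>
    u = (\<lambda>t. w t - (w i - s) / h i * h t)(i := 0)"
proof -
  have "u i = 0"
    using u by (simp add: configs_def)
  have "restr w (Q - I) = restr u (Q - I) \<and>
      (\<exists>c. restr w I = (\<lambda>t. ((restr u (I - {i}))(i := s)) t + c * h t)) \<longleftrightarrow>
      (\<exists>c. w = (\<lambda>t. (u(i := s)) t + c * h t))"
    using restr_translate_iff[OF assms(1-3) w u] by blast
  also have "\<dots> \<longleftrightarrow> u = (\<lambda>t. w t - (w i - s) / h i * h t)(i := 0)"
    unfolding eq_translate_upd_iff[where h = h and i = i and u = u, OF assms(4) \<open>u i = 0\<close>] by simp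
  finally show ?thesis .
qed

text \<open>The Kraus operator \<open>K\<^sub>s\<close> guesses the value \<open>s\<close> of the erased qudit, keeps the guess
  only if it passes the check \<open>h\<close>, and spreads it uniformly over its translates by multiples
  of \<open>h\<close>; on code states these translates cannot be told apart.\<close>
definition recovery_kraus :: "('a::{finite,field} \<Rightarrow> 'a) \<Rightarrow> 'a \<Rightarrow> 'a \<Rightarrow> 'a qop" where
  "recovery_kraus h i s v u =
     (if syndrome h (u(i := s)) = 0 \<and> (\<exists>c. v = (\<lambda>t. (u(i := s)) t + c * h t))
      then complex_of_real (1 / sqrt (real CARD('a))) else 0)"

lemma sum_recovery_kraus_products:
  fixes h :: "'a::{finite,field} \<Rightarrow> 'a"
  assumes "i \<in> I" and "h \<in> configs I" and "h i \<noteq> 0"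
    and u: "u \<in> configs (I - {i})" and u': "u' \<in> configs (I - {i})"
  shows "(\<Sum>v\<in>configs I. cnj (recovery_kraus h i s v u) * recovery_kraus h i s v u') =
    (if u = u' \<and> syndrome h (u(i := s)) = 0 then 1 else 0)"
proof -
  define T where "T u = range (\<lambda>c. (\<lambda>t. (u(i := s)) t + c * h t))" for u
  have "u i = 0" and "u' i = 0"
    using u u' by (auto simp: configs_def)
  have weight: "cnj (complex_of_real (1 / sqrt (real CARD('a)))) * complex_of_real (1 / sqrt (real CARD('a)))
      = 1 / of_nat CARD('a)"
    by (simp flip: of_real_mult)
  have products: "cnj (recovery_kraus h i s v u) * recovery_kraus h i s v u' =
      (if u = u' \<and> syndrome h (u(i := s)) = 0 \<and> v \<in> T u then 1 / of_nat CARD('a) else 0)" for v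
    using translate_upd_inject[where h = h and i = i and u = u and u' = u', OF assms(3) \<open>u i = 0\<close> \<open>u' i = 0\<close>] weight
    by (auto simp: recovery_kraus_def T_def)
  show ?thesis
  proof (cases "u' = u \<and> syndrome h (u(i := s)) = 0")
    case True
    then have "u' = u" and "syndrome h (u(i := s)) = 0"
      by auto
    have "T u \<subseteq> configs I"
      using u assms(1,2) by (auto simp: T_def configs_def)
    have "card (T u) = CARD('a)"
      unfolding T_def
      using translate_upd_inject[where h = h and i = i and u = u and u' = u, OF assms(3) \<open>u i = 0\<close> \<open>u i = 0\<close>]
      by (subst card_image) (auto intro: injI)
    have "(\<Sum>v\<in>configs I. cnj (recovery_kraus h i s v u) * recovery_kraus h i s v u') =
        (\<Sum>v\<in>configs I \<inter> T u. 1 / of_nat CARD('a))"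
      using products[unfolded \<open>u' = u\<close>] \<open>syndrome h (u(i := s)) = 0\<close>
      by (simp add: \<open>u' = u\<close> sum.inter_restrict del: sum_constant)
    also have "\<dots> = 1"
      using \<open>T u \<subseteq> configs I\<close> \<open>card (T u) = CARD('a)\<close> by (simp add: Int_absorb1)
    finally show ?thesis
      using True by simp
  next
    case False
    then show ?thesis
      by (auto simp: products)
  qed
qed

lemma kraus_channel_recovery_kraus:
  fixes h :: "'a::{finite,field} \<Rightarrow> 'a"
  assumes "i \<in> qudits" and "i \<in> I" and "h \<in> configs I" and "h i \<noteq> 0"
    and e: "bij_betw e {..<CARD('a)} UNIV"
  shows "kraus_channel (I - {i}) I (\<lambda>j. recovery_kraus h i (e j)) CARD('a)"
  unfolding kraus_channel_def
proof (intro ballI)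
  fix u u' :: "'a \<Rightarrow> 'a"
  assume u: "u \<in> configs (I - {i})" and u': "u' \<in> configs (I - {i})"
  then have "u i = 0"
    by (simp add: configs_def)
  have unique: "syndrome h (u(i := s)) = 0 \<longleftrightarrow> s = - syndrome h u / h i" for s
    using syndrome_upd[OF assms(1), of h u s] \<open>u i = 0\<close> assms(4)
    by (auto simp: field_simps eq_neg_iff_add_eq_0 add.commute)
  have "(\<Sum>j<CARD('a). \<Sum>v\<in>configs I. cnj (recovery_kraus h i (e j) v u) * recovery_kraus h i (e j) v u') =
      (\<Sum>j<CARD('a). (\<lambda>s. if u = u' \<and> syndrome h (u(i := s)) = 0 then 1 else 0) (e j))"
    using sum_recovery_kraus_products[OF assms(2-4) u u'] by simp
  also have "\<dots> = (\<Sum>s\<in>UNIV. if u = u' \<and> syndrome h (u(i := s)) = 0 then 1 else 0)"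
    by (rule sum.reindex_bij_betw[OF e])
  also have "\<dots> = (if u = u' then 1 else 0)"
    by (simp add: unique)
  finally show "(\<Sum>j<CARD('a). \<Sum>v\<in>configs I. cnj (recovery_kraus h i (e j) v u) * recovery_kraus h i (e j) v u') =
      (if u = u' then 1 else 0)" .
qed

lemma apply_ext_vec_recovery_kraus:
  fixes h :: "'a::{finite,field} \<Rightarrow> 'a" and \<phi> :: "('a \<Rightarrow> 'a) \<Rightarrow> complex"
  assumes "i \<in> I" and "I \<subseteq> qudits" and "h \<in> configs I" and "h i \<noteq> 0"
    and "stabilized_by h \<phi>" and w: "w \<in> configs qudits"
  shows "apply_ext_vec qudits (I - {i}) I (recovery_kraus h i s) (\<lambda>u. \<phi> (u(i := x))) w =
    (if x = s then \<phi> w * complex_of_real (1 / sqrt (real CARD('a))) else 0)"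
proof -
  let ?a = "complex_of_real (1 / sqrt (real CARD('a)))"
  define c\<^sub>0 where "c\<^sub>0 = (w i - s) / h i"
  define w\<^sub>0 where "w\<^sub>0 = (\<lambda>t. w t - c\<^sub>0 * h t)"
  have "i \<in> qudits"
    using assms(1,2) by blast
  have w\<^sub>0i: "w\<^sub>0 i = s"
    using assms(4) by (simp add: w\<^sub>0_def c\<^sub>0_def)
  have "\<phi> w\<^sub>0 = \<phi> w"
    using stabilized_by_translate[OF assms(5), of w "- c\<^sub>0"] by (simp add: w\<^sub>0_def)
  have domain: "(I - {i}) \<union> (qudits - I) = qudits - {i}"
    using assms(1,2) by blast
  have "w\<^sub>0(i := 0) \<in> configs (qudits - {i})"
    using w assms(2,3) by (auto simp: w\<^sub>0_def configs_def)
  have summand: "(if restr w (qudits - I) = restr u (qudits - I)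
      then recovery_kraus h i s (restr w I) (restr u (I - {i})) * \<phi> (u(i := x)) else 0) =
    (if u = w\<^sub>0(i := 0) then ?a * (if syndrome h w\<^sub>0 = 0 then \<phi> (w\<^sub>0(i := x)) else 0) else 0)"
    if u: "u \<in> configs (qudits - {i})" for u
  proof -
    have match: "restr w (qudits - I) = restr u (qudits - I) \<and>
        (\<exists>c. restr w I = (\<lambda>t. ((restr u (I - {i}))(i := s)) t + c * h t)) \<longleftrightarrow> u = w\<^sub>0(i := 0)"
      using restr_translate_ex_iff[OF assms(2,1,3,4) w u] by (simp add: w\<^sub>0_def c\<^sub>0_def)
    have "syndrome h ((restr (w\<^sub>0(i := 0)) (I - {i}))(i := s)) = syndrome h w\<^sub>0"
      by (rule syndrome_cong[OF assms(3)]) (auto simp: restr_def w\<^sub>0i)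
    then show ?thesis
      using match by (auto simp: recovery_kraus_def w\<^sub>0i)
  qed
  have "apply_ext_vec qudits (I - {i}) I (recovery_kraus h i s) (\<lambda>u. \<phi> (u(i := x))) w =
      ?a * (if syndrome h w\<^sub>0 = 0 then \<phi> (w\<^sub>0(i := x)) else 0)"
    unfolding apply_ext_vec_def domain
    using \<open>w\<^sub>0(i := 0) \<in> configs (qudits - {i})\<close> by (simp add: summand cong: sum.cong)
  also have "\<dots> = ?a * (if x = s then \<phi> w else 0)"
    using stabilized_by_upd[OF assms(5) \<open>i \<in> qudits\<close> assms(4)] w\<^sub>0i \<open>\<phi> w\<^sub>0 = \<phi> w\<close> by simp
  finally show ?thesis
    by simp
qed

lemma apply_ext_recovery_kraus_pure:
  fixes h :: "'a::{finite,field} \<Rightarrow> 'a" and \<phi> :: "('a \<Rightarrow> 'a) \<Rightarrow> complex"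
  assumes "i \<in> I" and "I \<subseteq> qudits" and "h \<in> configs I" and "h i \<noteq> 0"
    and "stabilized_by h \<phi>" and "v \<in> configs qudits" and "v' \<in> configs qudits"
  shows "apply_ext qudits (I - {i}) I (\<lambda>j. recovery_kraus h i (e j)) CARD('a)
      (\<lambda>u u'. \<Sum>x\<in>UNIV. \<phi> (u(i := x)) * cnj (\<phi> (u'(i := x)))) v v' = \<phi> v * cnj (\<phi> v')"
proof -
  let ?a = "complex_of_real (1 / sqrt (real CARD('a)))"
  have "?a * cnj ?a * of_nat CARD('a) = 1"
    using CARD_field_ge_2[where 'a='a] by (simp flip: of_real_mult)
  have "apply_ext qudits (I - {i}) I (\<lambda>j. recovery_kraus h i (e j)) CARD('a)
      (\<lambda>u u'. \<Sum>x\<in>UNIV. \<phi> (u(i := x)) * cnj (\<phi> (u'(i := x)))) v v' =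
      (\<Sum>j<CARD('a). \<Sum>x\<in>UNIV. (if x = e j then \<phi> v * ?a else 0) * cnj (if x = e j then \<phi> v' * ?a else 0))"
    unfolding apply_ext_sum_rank_one
    by (simp only: apply_ext_vec_recovery_kraus[OF assms(1-5)] assms(6,7))
  also have "\<dots> = \<phi> v * cnj (\<phi> v') * (?a * cnj ?a * of_nat CARD('a))"
    by (simp add: if_distrib[of "\<lambda>z. z * _"] mult_ac cong: if_cong)
  finally show ?thesis
    using \<open>?a * cnj ?a * of_nat CARD('a) = 1\<close> by simp
qed

lemma apply_ext_recovery_kraus_code_state:
  fixes h :: "'a::{finite,field} \<Rightarrow> 'a"
  assumes "i \<in> I" and "I \<subseteq> qudits" and "h \<in> configs I" and "h i \<noteq> 0"
    and "\<And>\<phi>. \<phi> \<in> V \<Longrightarrow> stabilized_by h \<phi>" and "code_state qudits V \<psi>"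
    and v: "v \<in> configs qudits" and v': "v' \<in> configs qudits"
  shows "apply_ext qudits (I - {i}) I (\<lambda>j. recovery_kraus h i (e j)) CARD('a)
      (ptrace qudits (qudits - {i}) \<psi>) v v' = \<psi> v v'"
proof -
  let ?K = "\<lambda>j. recovery_kraus h i (e j)"
  obtain n :: nat and p \<phi> where \<phi>: "\<forall>k<n. \<phi> k \<in> V"
    and \<psi>: "\<forall>u\<in>configs qudits. \<forall>u'\<in>configs qudits.
      \<psi> u u' = (\<Sum>k<n. complex_of_real (p k) * \<phi> k u * cnj (\<phi> k u'))"
    using assms(6) unfolding code_state_def by blast
  have "i \<in> qudits"
    using assms(1,2) by blast
  have reduced: "ptrace qudits (qudits - {i}) \<psi> u u' =
      (\<Sum>k<n. complex_of_real (p k) * (\<Sum>x\<in>UNIV. \<phi> k (u(i := x)) * cnj (\<phi> k (u'(i := x)))))"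
    if "u \<in> configs (qudits - {i})" and "u' \<in> configs (qudits - {i})" for u u'
  proof -
    have "u(i := x) \<in> configs qudits" and "u'(i := x) \<in> configs qudits" for x
      using that \<open>i \<in> qudits\<close> by (auto simp: configs_def)
    then have "ptrace qudits (qudits - {i}) \<psi> u u' =
        (\<Sum>x\<in>UNIV. \<Sum>k<n. complex_of_real (p k) * \<phi> k (u(i := x)) * cnj (\<phi> k (u'(i := x))))"
      using ptrace_remove_qudit[OF \<open>i \<in> qudits\<close> that] \<psi> by simp
    also have "\<dots> = (\<Sum>k<n. \<Sum>x\<in>UNIV. complex_of_real (p k) * \<phi> k (u(i := x)) * cnj (\<phi> k (u'(i := x))))"
      by (rule sum.swap)
    finally show ?thesis
      by (simp add: sum_distrib_left mult.assoc)
  qed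
  have "(I - {i}) \<union> (qudits - I) = qudits - {i}"
    using assms(1,2) by blast
  then have "apply_ext qudits (I - {i}) I ?K CARD('a) (ptrace qudits (qudits - {i}) \<psi>) v v' =
      apply_ext qudits (I - {i}) I ?K CARD('a) (\<lambda>u u'. \<Sum>k<n. complex_of_real (p k) *
        (\<Sum>x\<in>UNIV. \<phi> k (u(i := x)) * cnj (\<phi> k (u'(i := x))))) v v'"
    by (intro apply_ext_cong) (simp add: reduced)
  also have "\<dots> = (\<Sum>k<n. complex_of_real (p k) * (\<phi> k v * cnj (\<phi> k v')))"
    unfolding apply_ext_sum
    using apply_ext_recovery_kraus_pure[OF assms(1-4) assms(5) v v'] \<phi> by (intro sum.cong) auto
  also have "\<dots> = \<psi> v v'"
    using \<psi> v v' by (simp add: mult_ac)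
  finally show ?thesis .
qed

lemma locally_recoverable_by_local_checks:
  assumes "\<And>i. i \<in> qudits \<Longrightarrow> \<exists>I h. i \<in> I \<and> I \<subseteq> qudits \<and> card I \<le> r \<and>
      h \<in> configs I \<and> h i \<noteq> 0 \<and> (\<forall>\<phi>\<in>V. stabilized_by h \<phi>)"
  shows "locally_recoverable (qudits :: 'a::{finite,field} set) V r"
  unfolding locally_recoverable_def
proof
  fix i :: 'a
  assume "i \<in> qudits"
  then obtain I h where I: "i \<in> I" "I \<subseteq> qudits" "card I \<le> r" and h: "h \<in> configs I" "h i \<noteq> 0"
    and stabilized: "\<forall>\<phi>\<in>V. stabilized_by h \<phi>"
    using assms[OF \<open>i \<in> qudits\<close>] by blast
  obtain e :: "nat \<Rightarrow> 'a" where e: "bij_betw e {..<CARD('a)} UNIV"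
    using ex_bij_betw_nat_finite[of "UNIV :: 'a set"] by (auto simp: atLeast0LessThan)
  have "kraus_channel (I - {i}) I (\<lambda>j. recovery_kraus h i (e j)) CARD('a)"
    using kraus_channel_recovery_kraus[OF \<open>i \<in> qudits\<close> I(1) h e] .
  moreover have "\<forall>\<psi>. code_state qudits V \<psi> \<longrightarrow> (\<forall>v\<in>configs qudits. \<forall>v'\<in>configs qudits.
      apply_ext qudits (I - {i}) I (\<lambda>j. recovery_kraus h i (e j)) CARD('a)
        (ptrace qudits (qudits - {i}) \<psi>) v v' = \<psi> v v')"
    using apply_ext_recovery_kraus_code_state[OF I(1,2) h, where e = e and V = V] stabilized by blast
  ultimately show "\<exists>I. i \<in> I \<and> I \<subseteq> qudits \<and> card I \<le> r \<and> (\<exists>K m. kraus_channel (I - {i}) I K m \<and>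
      (\<forall>\<psi>. code_state qudits V \<psi> \<longrightarrow> (\<forall>v\<in>configs qudits. \<forall>v'\<in>configs qudits.
        apply_ext qudits (I - {i}) I K m (ptrace qudits (qudits - {i}) \<psi>) v v' = \<psi> v v')))"
    using I by (intro exI[of _ I] conjI exI[of _ "\<lambda>j. recovery_kraus h i (e j)"] exI[of _ "CARD('a)"])
qed

theorem corollary5p8:
  fixes r l :: nat
  assumes "r dvd (card (UNIV :: ('a::{finite,field}) set) - 1)"
    and "r \<ge> 3"
    and "card (UNIV :: 'a set) \<le> 2 * l"
    and "l \<le> card (UNIV :: 'a set) - 1"
  shows "locally_recoverable (qudits :: 'a set)
           (CSS_space (TB_code r l :: ('a \<Rightarrow> 'a) set) (TB_code r l)) r"
proof (rule locally_recoverable_by_local_checks)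
  fix i :: 'a
  assume "i \<in> qudits"
  then have "i \<noteq> 0"
    by (simp add: qudits_def)
  have "local_check r i \<in> TB_code r l" and "local_check r i \<in> dual_code (TB_code r l)"
    using local_check_in_TB_code[OF assms(1)] local_check_in_dual_code[OF assms(1,2)] assms(2) \<open>i \<noteq> 0\<close>
    by auto
  then have "\<forall>\<phi>\<in>CSS_space (TB_code r l) (TB_code r l). stabilized_by (local_check r i) \<phi>"
    using CSS_space_stabilized_by by blast
  moreover have "i \<in> recovery_set r i" and "recovery_set r i \<subseteq> qudits"
    and "local_check r i \<in> configs (recovery_set r i)" and "local_check r i i \<noteq> 0"
    using \<open>i \<noteq> 0\<close> by (auto simp: recovery_set_def local_check_def configs_def qudits_def)
  moreover have "card (recovery_set r i) \<le> r"
    using assms(2) by (intro card_recovery_set_le) simp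
  ultimately show "\<exists>I h. i \<in> I \<and> I \<subseteq> qudits \<and> card I \<le> r \<and> h \<in> configs I \<and> h i \<noteq> 0 \<and>
      (\<forall>\<phi>\<in>CSS_space (TB_code r l) (TB_code r l). stabilized_by h \<phi>)"
    by blast
qed

end
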